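(* Let $\ell\ge 1$, $u=a^{\ell+1}$ and $v=a^{\ell}b$. For $\phi\in\mathbf{LTL}(\mathbf{F},\mathbf{X},\wedge)$ define $[\phi]\in\mathbf{LTL}(\mathbf{X},\wedge)$ inductively by $[c]=c$, $[\phi_1\wedge\phi_2]=[\phi_1]\wedge[\phi_2]$, $[\mathbf{X}\phi']=\mathbf{X}[\phi']$, $[\mathbf{F}\phi']=[\phi']$. Then for every $\phi\in\mathbf{LTL}(\mathbf{F},\mathbf{X},\wedge)$: (i) for every word $w$ and position $i$, $w,i\models[\phi]$ implies $w,i\models\phi$; (ii) for all $i\in[2,\ell+1]$ and $i'\in[1,i-1]$, $u,i\models\phi$ implies $v,i'\models\phi$; (iii) for all $i\in[1,\ell+1]$, if $u,i\models\phi$ and $v,i\not\models\phi$ then $u,i\models[\phi]$. Consequently, if $\phi$ separates $u$ from a family of words containing $v$, then $[\phi]$ (whose size is at most that of $\phi$) also separates $u$ from that family.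
   Context: Alphabet $\Sigma=\{a,b\}$; words nonempty, indexed from 1. Semantics on a word $w$ of length $\ell$ at position $i\in[1,\ell]$: $w,i\models c$ iff $w(i)=c$; $\wedge$ as usual; $w,i\models\mathbf{X}\phi$ iff $i<\ell$ and $w,i+1\models\phi$; $w,i\models\mathbf{F}\phi$ iff $w,i'\models\phi$ for some $i'\in[i,\ell]$; $w\models\phi$ iff $w,1\models\phi$. Size = number of syntax tree nodes. $\phi$ separates $u$ from a family of words if $u\models\phi$ and no word of the family satisfies $\phi$. *)

theory Defs
  imports Main
begin

datatype letter = LA | LB

datatype ltl = Atom letter | And ltl ltl | Next ltl | Fin ltl

text \<open>Words are lists; positions are 1-indexed, position i refers to w ! (i - 1).\<close>
fun sat :: "letter list \<Rightarrow> nat \<Rightarrow> ltl \<Rightarrow> bool" where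
  "sat w i (Atom c) = (w ! (i - 1) = c)"
| "sat w i (And p q) = (sat w i p \<and> sat w i q)"
| "sat w i (Next p) = (i < length w \<and> sat w (Suc i) p)"
| "sat w i (Fin p) = (\<exists>i'. i \<le> i' \<and> i' \<le> length w \<and> sat w i' p)"

definition models :: "letter list \<Rightarrow> ltl \<Rightarrow> bool" where
  "models w p = sat w 1 p"

fun fsize :: "ltl \<Rightarrow> nat" where
  "fsize (Atom c) = 1"
| "fsize (And p q) = fsize p + fsize q + 1"
| "fsize (Next p) = fsize p + 1"
| "fsize (Fin p) = fsize p + 1"

fun noF :: "ltl \<Rightarrow> bool" where
  "noF (Atom c) = True"
| "noF (And p q) = (noF p \<and> noF q)"
| "noF (Next p) = noF p"
| "noF (Fin p) = False"

fun strip :: "ltl \<Rightarrow> ltl" where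
  "strip (Atom c) = Atom c"
| "strip (And p q) = And (strip p) (strip q)"
| "strip (Next p) = Next (strip p)"
| "strip (Fin p) = strip p"

definition separates :: "ltl \<Rightarrow> letter list \<Rightarrow> letter list set \<Rightarrow> bool" where
  "separates p u W = (models u p \<and> (\<forall>w\<in>W. \<not> models w p))"

end

theory Submission
  imports Defs
begin

text \<open>On a constant word \<open>a^n\<close> the truth of an \<open>F\<close>-free formula is downward closed in
the position: it only asks that certain later positions exist and carry \<open>a\<close>. Hence whenever
\<open>\<phi>\<close> holds at \<open>i\<close>, the witness of each \<open>F\<close> may be moved back to the current position and
\<open>[\<phi>]\<close> holds at every \<open>j \<le> i\<close>. Part (ii) is a similar induction matching a position of
\<open>a^(l+1)\<close> with a position further left in \<open>a^l b\<close>.\<close>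

lemma noF_strip: "noF (strip p)"
  by (induction p) auto

lemma fsize_strip_le: "fsize (strip p) \<le> fsize p"
  by (induction p) auto

lemma sat_strip_imp_sat: "i \<le> length w \<Longrightarrow> sat w i (strip p) \<Longrightarrow> sat w i p"
  by (induction p arbitrary: i) auto

lemma sat_replicate_imp_sat_strip:
  assumes "j \<le> i" "i \<le> n" "sat (replicate n LA) i p"
  shows "sat (replicate n LA) j (strip p)"
  using assms
proof (induction p arbitrary: i j)
  case (Atom c)
  then show ?case by (cases i) auto
next
  case (Next p)
  then show ?case by (auto intro!: Next.IH[of "Suc j" "Suc i"])
next
  case (Fin p)
  then obtain i' where "i \<le> i'" "i' \<le> n" "sat (replicate n LA) i' p" by auto
  with Fin.prems(1) show ?case using Fin.IH[of j i'] by simp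
qed auto

lemma sat_replicate_Suc_imp_sat_snoc_LB:
  assumes "1 \<le> i'" "i' < i" "i \<le> l + 1" "sat (replicate (l + 1) LA) i p"
  shows "sat (replicate l LA @ [LB]) i' p"
  using assms
proof (induction p arbitrary: i i')
  case (Atom c)
  then show ?case by (auto simp: nth_append)
next
  case (Next p)
  then show ?case using Next.IH[of "Suc i'" "Suc i"] by auto
next
  case (Fin p)
  then obtain j where j: "i \<le> j" "j \<le> l + 1" "sat (replicate (l + 1) LA) j p" by auto
  with Fin.prems have "sat (replicate l LA @ [LB]) (j - 1) p"
    using Fin.IH[of "j - 1" j] by simp
  with j Fin.prems show ?case by (auto intro!: exI[of _ "j - 1"])
qed auto

lemma separates_replicate_strip:
  assumes "1 \<le> n" "\<forall>w\<in>W. w \<noteq> []" "separates p (replicate n LA) W"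
  shows "separates (strip p) (replicate n LA) W"
proof -
  have "models (replicate n LA) (strip p)"
    using assms sat_replicate_imp_sat_strip[of 1 1 n p]
    by (simp add: separates_def models_def)
  moreover have "\<not> models w (strip p)" if "w \<in> W" for w
    using that assms sat_strip_imp_sat[of 1 w p]
    by (auto simp: separates_def models_def Suc_le_eq)
  ultimately show ?thesis by (simp add: separates_def)
qed

theorem mainTheorem15:
  fixes l :: nat and u v :: "letter list"
  assumes "l \<ge> 1"
    and "u = replicate (l + 1) LA"
    and "v = replicate l LA @ [LB]"
  shows "\<forall>\<phi>.
      noF (strip \<phi>) \<and> fsize (strip \<phi>) \<le> fsize \<phi>
    \<and> (\<forall>w i. w \<noteq> [] \<and> 1 \<le> i \<and> i \<le> length w \<longrightarrow> sat w i (strip \<phi>) \<longrightarrow> sat w i \<phi>)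
    \<and> (\<forall>i i'. 2 \<le> i \<and> i \<le> l + 1 \<and> 1 \<le> i' \<and> i' \<le> i - 1 \<longrightarrow> sat u i \<phi> \<longrightarrow> sat v i' \<phi>)
    \<and> (\<forall>i. 1 \<le> i \<and> i \<le> l + 1 \<longrightarrow> sat u i \<phi> \<and> \<not> sat v i \<phi> \<longrightarrow> sat u i (strip \<phi>))
    \<and> (\<forall>W. (\<forall>w\<in>W. w \<noteq> []) \<and> v \<in> W \<and> separates \<phi> u W \<longrightarrow> separates (strip \<phi>) u W)"
proof (intro allI conjI impI)
  fix p w i
  assume "w \<noteq> [] \<and> 1 \<le> i \<and> i \<le> length w" "sat w i (strip p)"
  then show "sat w i p" by (simp add: sat_strip_imp_sat)
next
  fix p i i'
  assume "2 \<le> i \<and> i \<le> l + 1 \<and> 1 \<le> i' \<and> i' \<le> i - 1" "sat u i p"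
  then show "sat v i' p" using assms(2,3) sat_replicate_Suc_imp_sat_snoc_LB[of i' i l p] by auto
next
  fix p i
  assume "1 \<le> i \<and> i \<le> l + 1" "sat u i p \<and> \<not> sat v i p"
  then show "sat u i (strip p)" using assms(2) sat_replicate_imp_sat_strip[of i i "l + 1" p] by simp
next
  fix p W
  assume "(\<forall>w\<in>W. w \<noteq> []) \<and> v \<in> W \<and> separates p u W"
  then show "separates (strip p) u W" using assms(2) separates_replicate_strip[of "l + 1" W p] by simp
qed (simp_all add: noF_strip fsize_strip_le)

end
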